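(* Fix constants $\lambda_1,\ldots,\lambda_K\ge 0$ and $\mu_1,\ldots,\mu_M\ge 0$. For a channel realization $\boldsymbol{\alpha}$ consider the problem $$\max_{p_1,\ldots,p_K\ge 0}\ \log\Big(1+\sum_{k=1}^K h_kp_k\Big)-\sum_{k=1}^K\lambda_kp_k-\sum_{m=1}^M\mu_m\sum_{k=1}^K g_{km}p_k .$$ Then, for almost every realization $\boldsymbol{\alpha}$, any optimal solution $(p_1^*,\ldots,p_K^* )$ of this problem has at most one index $i\in\{1,\ldots,K\}$ with $p_i^*>0$.
   Context: $\boldsymbol{\alpha}=(h_1,\ldots,h_K,g_{11},\ldots,g_{KM})$ is a random vector of nonnegative channel power gains ($h_k$: secondary user $k$ to secondary base station; $g_{km}$: secondary user $k$ to primary receiver $m$) with a continuous, differentiable joint cumulative distribution function, the $h_k$'s and $g_{km}$'s being independent. "Almost every" refers to the distribution of $\boldsymbol{\alpha}$. *)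

theory Defs
  imports "HOL-Probability.Probability"
begin

text \<open>Channel realization: a vector indexed by 'k + ('k \<times> 'm).
  Coordinate Inl k is h_k (user k to base station),
  coordinate Inr (k,m) is g_km (user k to primary receiver m).\<close>

definition chan_h :: "real ^ ('k::finite + ('k \<times> 'm::finite)) \<Rightarrow> 'k \<Rightarrow> real" where
  "chan_h \<alpha> k = \<alpha> $ Inl k"

definition chan_g :: "real ^ ('k::finite + ('k \<times> 'm::finite)) \<Rightarrow> 'k \<Rightarrow> 'm \<Rightarrow> real" where
  "chan_g \<alpha> k m = \<alpha> $ Inr (k, m)"

definition objective ::
  "('k::finite \<Rightarrow> real) \<Rightarrow> ('m::finite \<Rightarrow> real) \<Rightarrow> real ^ ('k + ('k \<times> 'm)) \<Rightarrow> ('k \<Rightarrow> real) \<Rightarrow> real" where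
  "objective lam mu \<alpha> p =
     ln (1 + (\<Sum>k\<in>UNIV. chan_h \<alpha> k * p k))
     - (\<Sum>k\<in>UNIV. lam k * p k)
     - (\<Sum>m\<in>UNIV. mu m * (\<Sum>k\<in>UNIV. chan_g \<alpha> k m * p k))"

definition is_optimal ::
  "('k::finite \<Rightarrow> real) \<Rightarrow> ('m::finite \<Rightarrow> real) \<Rightarrow> real ^ ('k + ('k \<times> 'm)) \<Rightarrow> ('k \<Rightarrow> real) \<Rightarrow> bool" where
  "is_optimal lam mu \<alpha> p \<longleftrightarrow>
     (\<forall>k. p k \<ge> 0) \<and>
     (\<forall>q. (\<forall>k. q k \<ge> 0) \<longrightarrow> objective lam mu \<alpha> q \<le> objective lam mu \<alpha> p)"

definition joint_cdf :: "(real ^ 'n::finite) measure \<Rightarrow> real ^ 'n \<Rightarrow> real" where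
  "joint_cdf D x = measure D {y. \<forall>i. y $ i \<le> x $ i}"

end

theory Submission
  imports Defs
begin

text \<open>At an optimum every active user i satisfies the first-order condition
  h_i = c_i (1 + \<Sum>k h_k p_k), where c_i is its marginal cost; so two active users i, j would
  satisfy h_i = h_j c_i / c_j. Since h_i is independent of all other channel gains and has an
  atomless distribution (the joint CDF is continuous), this equation fails almost surely.\<close>

definition marginal_cost ::
  "('k::finite \<Rightarrow> real) \<Rightarrow> ('m::finite \<Rightarrow> real) \<Rightarrow> real ^ ('k + ('k \<times> 'm)) \<Rightarrow> 'k \<Rightarrow> real" where
  "marginal_cost lam mu \<alpha> i = lam i + (\<Sum>m\<in>UNIV. mu m * chan_g \<alpha> i m)"

lemma sum_mult_add_at:
  fixes f p :: "'k::finite \<Rightarrow> 'a::comm_semiring_1"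
  shows "(\<Sum>k\<in>UNIV. f k * (p k + (if k = i then t else 0))) = (\<Sum>k\<in>UNIV. f k * p k) + f i * t"
  by (simp add: distrib_left sum.distrib if_distrib[of "(*) _"] cong: if_cong)

lemma objective_add_coordinate:
  fixes p :: "'k::finite \<Rightarrow> real" and \<alpha> :: "real ^ ('k + ('k \<times> 'm::finite))"
  shows "objective lam mu \<alpha> (\<lambda>k. p k + (if k = i then t else 0)) =
    ln (1 + (\<Sum>k\<in>UNIV. chan_h \<alpha> k * p k) + chan_h \<alpha> i * t)
     - (\<Sum>k\<in>UNIV. lam k * p k)
     - (\<Sum>m\<in>UNIV. mu m * (\<Sum>k\<in>UNIV. chan_g \<alpha> k m * p k))
     - marginal_cost lam mu \<alpha> i * t"
  unfolding objective_def marginal_cost_def sum_mult_add_at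
  by (simp add: distrib_left sum.distrib algebra_simps sum_distrib_right sum_distrib_left)

lemma optimal_first_order_condition:
  fixes p :: "'k::finite \<Rightarrow> real" and \<alpha> :: "real ^ ('k + ('k \<times> 'm::finite))"
  assumes nonneg: "\<forall>l. \<alpha> $ l \<ge> 0" and opt: "is_optimal lam mu \<alpha> p" and active: "p i > 0"
  shows "chan_h \<alpha> i = marginal_cost lam mu \<alpha> i * (1 + (\<Sum>k\<in>UNIV. chan_h \<alpha> k * p k))"
proof -
  define S where "S = (\<Sum>k\<in>UNIV. chan_h \<alpha> k * p k)"
  define \<phi> where "\<phi> t = objective lam mu \<alpha> (\<lambda>k. p k + (if k = i then t else 0))" for t
  have p_nonneg: "\<forall>k. p k \<ge> 0" using opt by (simp add: is_optimal_def)
  have h_nonneg: "\<forall>k. chan_h \<alpha> k \<ge> 0" using nonneg by (simp add: chan_h_def)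
  have "0 \<le> S"
    unfolding S_def using p_nonneg h_nonneg by (intro sum_nonneg) simp
  then have S_pos: "1 + S > 0" by simp
  \<comment> \<open>moving p_i by less than p_i keeps the allocation feasible, so \<phi> has a local maximum at 0\<close>
  have local_max: "\<forall>t. \<bar>0 - t\<bar> < p i \<longrightarrow> \<phi> t \<le> \<phi> 0"
  proof (intro allI impI)
    fix t assume "\<bar>0 - t\<bar> < p i"
    then have "\<forall>k. 0 \<le> p k + (if k = i then t else 0)" using p_nonneg by auto
    then show "\<phi> t \<le> \<phi> 0" using opt by (simp add: \<phi>_def is_optimal_def)
  qed
  have "(\<phi> has_real_derivative chan_h \<alpha> i / (1 + S) - marginal_cost lam mu \<alpha> i) (at 0)"
    unfolding \<phi>_def objective_add_coordinate S_def[symmetric]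
    using S_pos by (auto intro!: derivative_eq_intros)
  from DERIV_local_max[OF this active local_max]
  have "chan_h \<alpha> i / (1 + S) = marginal_cost lam mu \<alpha> i" by simp
  with S_pos show ?thesis unfolding S_def[symmetric] by (simp add: field_simps)
qed

lemma optimal_support_card_le_1:
  fixes p :: "'k::finite \<Rightarrow> real" and \<alpha> :: "real ^ ('k + ('k \<times> 'm::finite))"
  assumes nonneg: "\<forall>l. \<alpha> $ l \<ge> 0" and opt: "is_optimal lam mu \<alpha> p"
    and generic: "\<And>i j. i \<noteq> j \<Longrightarrow> chan_h \<alpha> j \<noteq> 0 \<and>
      chan_h \<alpha> i \<noteq> chan_h \<alpha> j * marginal_cost lam mu \<alpha> i / marginal_cost lam mu \<alpha> j"
  shows "card {i. p i > 0} \<le> 1"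
proof -
  have "i = j" if "p i > 0" "p j > 0" for i j
  proof (rule ccontr)
    assume "i \<noteq> j"
    note foc = optimal_first_order_condition[OF nonneg opt]
    have "marginal_cost lam mu \<alpha> j \<noteq> 0"
      using generic[OF \<open>i \<noteq> j\<close>] foc[OF \<open>p j > 0\<close>] by auto
    then have "chan_h \<alpha> i = chan_h \<alpha> j * marginal_cost lam mu \<alpha> i / marginal_cost lam mu \<alpha> j"
      using foc[OF \<open>p i > 0\<close>] foc[OF \<open>p j > 0\<close>] by (simp add: field_simps)
    with generic[OF \<open>i \<noteq> j\<close>] show False by blast
  qed
  then show ?thesis by (simp add: card_le_Suc0_iff_eq)
qed

lemma (in prob_space) AE_indep_var_pair_notin:
  assumes indep: "indep_var MV V MU U"
    and S: "S \<in> sets (MV \<Otimes>\<^sub>M MU)"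
    and slices: "\<And>v. v \<in> space MV \<Longrightarrow> AE x in M. (v, U x) \<notin> S"
  shows "AE x in M. (V x, U x) \<notin> S"
proof -
  from indep[unfolded indep_var_distribution_eq]
  have V: "random_variable MV V" and U: "random_variable MU U"
    and joint: "distr M MV V \<Otimes>\<^sub>M distr M MU U = distr M (MV \<Otimes>\<^sub>M MU) (\<lambda>x. (V x, U x))"
    by auto
  have VU: "random_variable (MV \<Otimes>\<^sub>M MU) (\<lambda>x. (V x, U x))"
    using V U by (rule measurable_Pair)
  interpret U: prob_space "distr M MU U" by (rule prob_space_distr[OF U])
  have slice_null: "emeasure (distr M MU U) (Pair v -` S) = 0" if "v \<in> space MV" for v
  proof -
    have "Pair v -` S \<in> sets MU" using S by (rule sets_Pair1)
    then have "emeasure (distr M MU U) (Pair v -` S) = emeasure M {x \<in> space M. (v, U x) \<in> S}"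
      using U by (simp add: emeasure_distr vimage_def Int_def conj_commute)
    also have "\<dots> = 0"
      using slices[OF that] U S that by (subst AE_iff_measurable[symmetric]) auto
    finally show ?thesis .
  qed
  have "emeasure M {x \<in> space M. (V x, U x) \<in> S} = emeasure (distr M (MV \<Otimes>\<^sub>M MU) (\<lambda>x. (V x, U x))) S"
    using S by (simp add: emeasure_distr[OF VU S] vimage_def Int_def conj_commute)
  also have "\<dots> = (\<integral>\<^sup>+v. emeasure (distr M MU U) (Pair v -` S) \<partial>distr M MV V)"
    unfolding joint[symmetric] by (rule U.emeasure_pair_measure_alt) (use S in simp)
  also have "\<dots> = 0"
    using slice_null by (subst nn_integral_cong[where v="\<lambda>_. 0"]) auto
  finally show ?thesis
    using VU S by (subst AE_iff_measurable[OF _ refl]) auto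
qed

definition vec_mask :: "'n::finite set \<Rightarrow> 'a::zero ^ 'n \<Rightarrow> 'a ^ 'n" where
  "vec_mask A x = (\<chi> i. if i \<in> A then x $ i else 0)"

lemma vec_mask_nth [simp]: "vec_mask A x $ i = (if i \<in> A then x $ i else 0)"
  by (simp add: vec_mask_def)

lemma vec_lambda_restrict_measurable:
  fixes A :: "'n::finite set"
  shows "(\<lambda>r. \<chi> i. if i \<in> A then r i else 0) \<in> borel_measurable (PiM A (\<lambda>_. borel :: real measure))"
proof (rule borel_measurable_euclidean_space[THEN iffD2], intro ballI)
  fix b :: "real ^ 'n" assume "b \<in> Basis"
  then obtain j where b: "b = axis j 1" by (auto simp: Basis_vec_def)
  show "(\<lambda>r. (\<chi> i. if i \<in> A then r i else 0) \<bullet> b) \<in> borel_measurable (PiM A (\<lambda>_. borel))"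
    unfolding b by (cases "j \<in> A") (simp_all add: inner_axis measurable_component_singleton)
qed

lemma (in prob_space) indep_var_vec_mask:
  fixes X :: "'a \<Rightarrow> real ^ 'n::finite"
  assumes indep: "indep_vars (\<lambda>_. borel) (\<lambda>i x. X x $ i) UNIV" and disj: "A \<inter> B = {}"
  shows "indep_var borel (\<lambda>x. vec_mask A (X x)) borel (\<lambda>x. vec_mask B (X x))"
proof -
  have "indep_var borel ((\<lambda>r. \<chi> i. if i \<in> A then r i else 0) \<circ> (\<lambda>x. restrict (\<lambda>i. X x $ i) A))
      borel ((\<lambda>r. \<chi> i. if i \<in> B then r i else 0) \<circ> (\<lambda>x. restrict (\<lambda>i. X x $ i) B))"
    using disj by (intro indep_var_compose[OF indep_var_restrict[OF indep]] vec_lambda_restrict_measurable) auto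
  then show ?thesis by (simp add: comp_def vec_mask_def cong: if_cong)
qed

lemma (in prob_space) AE_vec_nth_neq_function_of_others:
  fixes X :: "'a \<Rightarrow> real ^ 'n::finite" and f :: "real ^ 'n \<Rightarrow> real"
  assumes indep: "indep_vars (\<lambda>_. borel) (\<lambda>i x. X x $ i) UNIV"
    and atomless: "\<And>a. AE x in M. X x $ l \<noteq> a"
    and f: "f \<in> borel_measurable borel"
    and f_ignores_l: "\<And>v. f (vec_mask (-{l}) v) = f v"
  shows "AE x in M. X x $ l \<noteq> f (X x)"
proof -
  define S where "S = {vu \<in> space (borel \<Otimes>\<^sub>M borel). snd vu $ l = f (fst vu)}"
  have S: "S \<in> sets (borel \<Otimes>\<^sub>M borel)"
    unfolding S_def using f measurable_compose[OF measurable_snd borel_measurable_nth] by measurable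
  have "AE x in M. (vec_mask (-{l}) (X x), vec_mask {l} (X x)) \<notin> S"
    by (rule AE_indep_var_pair_notin[OF indep_var_vec_mask[OF indep] S])
      (use atomless in \<open>auto simp: S_def space_pair_measure\<close>)
  then show ?thesis
    by (simp add: S_def space_pair_measure f_ignores_l)
qed

lemma measure_slice_eq_0_of_continuous_joint_cdf:
  fixes D :: "(real ^ 'n::finite) measure"
  assumes "finite_measure D" and sets_D: "sets D = sets borel"
    and cdf_cont: "continuous_on UNIV (joint_cdf D)"
  shows "measure D {y. y $ l = a \<and> (\<forall>i. i \<noteq> l \<longrightarrow> y $ i \<le> t)} = 0"
proof -
  interpret finite_measure D by fact
  define corner where "corner s = (\<chi> i. if i = l then s else t)" for s
  define g where "g s = joint_cdf D (corner s)" for s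
  define slice where "slice = {y::real^'n. y $ l = a \<and> (\<forall>i. i \<noteq> l \<longrightarrow> y $ i \<le> t)}"
  have box: "{y. \<forall>i. y $ i \<le> corner s $ i} \<in> sets D" for s
    unfolding sets_D by measurable
  have bound: "measure D slice \<le> g a - g (a - e)" if "e > 0" for e
  proof -
    have sub: "{y. \<forall>i. y $ i \<le> corner (a - e) $ i} \<subseteq> {y. \<forall>i. y $ i \<le> corner a $ i}"
      using that by (auto simp: corner_def split: if_splits)
    have "slice \<subseteq> {y. \<forall>i. y $ i \<le> corner a $ i} - {y. \<forall>i. y $ i \<le> corner (a - e) $ i}"
      using that by (auto simp: slice_def corner_def not_le intro!: exI[of _ l])
    then have "measure D slice \<le> measure D ({y. \<forall>i. y $ i \<le> corner a $ i} - {y. \<forall>i. y $ i \<le> corner (a - e) $ i})"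
      using box by (intro finite_measure_mono) auto
    also have "\<dots> = g a - g (a - e)"
      unfolding g_def joint_cdf_def using finite_measure_Diff[OF box box sub] by simp
    finally show ?thesis .
  qed
  have "continuous_on UNIV corner"
    unfolding corner_def
  proof (intro continuous_on_vec_lambda)
    show "continuous_on UNIV (\<lambda>s. if i = l then s else t)" for i
      by (cases "i = l") (auto intro: continuous_intros)
  qed
  then have "continuous_on UNIV g"
    unfolding g_def using continuous_on_compose2[OF cdf_cont] by blast
  then have "isCont g a"
    by (simp add: continuous_on_eq_continuous_at)
  moreover have "((\<lambda>e. a - e) \<longlongrightarrow> a) (at_right 0)"
    by (auto intro!: tendsto_eq_intros)
  ultimately have "((\<lambda>e. g a - g (a - e)) \<longlongrightarrow> g a - g a) (at_right 0)"
    by (intro tendsto_diff tendsto_const isCont_tendsto_compose[of a g])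
  moreover have "\<forall>\<^sub>F e in at_right 0. measure D slice \<le> g a - g (a - e)"
    using eventually_at_right_less[of 0] by eventually_elim (rule bound)
  ultimately have "measure D slice \<le> 0"
    using tendsto_lowerbound trivial_limit_at_right_real by fastforce
  then show ?thesis unfolding slice_def by (simp add: measure_le_0_iff)
qed

lemma AE_vec_nth_neq_of_continuous_joint_cdf:
  fixes D :: "(real ^ 'n::finite) measure"
  assumes "finite_measure D" and sets_D: "sets D = sets borel"
    and cdf_cont: "continuous_on UNIV (joint_cdf D)"
  shows "AE y in D. y $ l \<noteq> a"
proof -
  define slice where "slice t = {y::real^'n. y $ l = a \<and> (\<forall>i. i \<noteq> l \<longrightarrow> y $ i \<le> real t)}" for t :: nat
  have "slice t \<in> null_sets D" for t
  proof -
    have "slice t \<in> sets D"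
      unfolding slice_def sets_D by measurable
    then show ?thesis
      using measure_slice_eq_0_of_continuous_joint_cdf[OF assms, of l a "real t"]
      by (simp add: slice_def finite_measure.emeasure_eq_measure[OF assms(1)] null_sets_def)
  qed
  then have "(\<Union>t. slice t) \<in> null_sets D" by blast
  moreover have "{y \<in> space D. \<not> y $ l \<noteq> a} \<subseteq> (\<Union>t. slice t)"
  proof
    fix y :: "real ^ 'n" assume "y \<in> {y \<in> space D. \<not> y $ l \<noteq> a}"
    then have "y $ l = a" by simp
    obtain t :: nat where "norm y \<le> real t" using real_arch_simple by blast
    then have "y $ i \<le> real t" for i
      using component_le_norm_cart[of y i] by linarith
    with \<open>y $ l = a\<close> show "y \<in> (\<Union>t. slice t)" by (auto simp: slice_def)
  qed
  ultimately show ?thesis by (rule AE_I')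
qed

theorem lemma3p1:
  fixes D :: "(real ^ ('k::finite + ('k \<times> 'm::finite))) measure"
    and lam :: "'k \<Rightarrow> real" and mu :: "'m \<Rightarrow> real"
  assumes lam_nonneg: "\<forall>k. lam k \<ge> 0"
    and mu_nonneg: "\<forall>m. mu m \<ge> 0"
    and prob: "prob_space D"
    and sets_D: "sets D = sets borel"
    and nonneg: "AE \<alpha> in D. \<forall>i. \<alpha> $ i \<ge> 0"
    and indep: "prob_space.indep_vars D (\<lambda>_. borel) (\<lambda>i \<alpha>. \<alpha> $ i) UNIV"
    and cdf_cont: "continuous_on UNIV (joint_cdf D)"
    and cdf_diff: "\<forall>x. joint_cdf D differentiable (at x)"
  shows "AE \<alpha> in D. \<forall>p. is_optimal lam mu \<alpha> p \<longrightarrow> card {i. p i > 0} \<le> 1"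
proof -
  interpret prob_space D by (rule prob)
  have atomless: "AE \<alpha> in D. \<alpha> $ l \<noteq> a" for l a
    by (rule AE_vec_nth_neq_of_continuous_joint_cdf[OF finite_measure_axioms sets_D cdf_cont])
  have generic_pair: "AE \<alpha> in D. chan_h \<alpha> j \<noteq> 0 \<and>
      chan_h \<alpha> i \<noteq> chan_h \<alpha> j * marginal_cost lam mu \<alpha> i / marginal_cost lam mu \<alpha> j"
    if "i \<noteq> j" for i j
    unfolding chan_h_def AE_conj_iff
    by (intro conjI atomless AE_vec_nth_neq_function_of_others[where X="\<lambda>\<alpha>. \<alpha>", OF indep atomless])
      (use that in \<open>simp_all add: marginal_cost_def chan_g_def\<close>)
  have "AE \<alpha> in D. \<forall>i\<in>UNIV. \<forall>j\<in>UNIV. i \<noteq> j \<longrightarrow> chan_h \<alpha> j \<noteq> 0 \<and>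
      chan_h \<alpha> i \<noteq> chan_h \<alpha> j * marginal_cost lam mu \<alpha> i / marginal_cost lam mu \<alpha> j"
    by (intro AE_finite_allI AE_impI generic_pair) simp_all
  with nonneg show ?thesis
    by eventually_elim (blast intro: optimal_support_card_le_1)
qed

end
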